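(* Let $A$ and $B$ be non-coprime nonzero integers, let $g=\gcd(A,B)$, and write $A=ga$, $B=gb$ (so $\gcd(a,b)=1$). Let $L$ be a positive integer, let $\ell=\prod_{p\nmid g}p^{\nu_p(L)}$ and $\gamma(L)=\max_{p\mid g}\left\lceil \nu_p(L)/\nu_p(g)\right\rceil$. Then the following are equivalent: (i) there exists a positive integer $K$ with $L\mid(A^K+B^K)$; (ii) there exists a positive integer $\kappa\ge\gamma(L)$ with $\ell\mid(a^{\kappa}+b^{\kappa})$; (iii) there exists a positive integer $k$ with $\ell\mid(a^k+b^k)$.
   Context: $\nu_p(n)$ denotes the $p$-adic valuation of a nonzero integer $n$; products and maxima indexed by $p$ range over primes. $\lceil x\rceil$ is the least integer $\ge x$. *)

theory Defs
  imports "HOL-Computational_Algebra.Computational_Algebra"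
begin

definition ell_part :: "int \<Rightarrow> int \<Rightarrow> int" where
  "ell_part L g = (\<Prod>p\<in>{p. prime p \<and> p dvd L \<and> \<not> p dvd g}. p ^ multiplicity p L)"

definition gamma_bound :: "int \<Rightarrow> int \<Rightarrow> int" where
  "gamma_bound L g = Max {\<lceil>real (multiplicity p L) / real (multiplicity p g)\<rceil> | p. prime p \<and> p dvd g}"

end

theory Submission
  imports Defs
begin

text \<open>
  Since \<open>A\<^sup>K + B\<^sup>K = g\<^sup>K (a\<^sup>K + b\<^sup>K)\<close>, the primes of \<open>L\<close> that divide \<open>g\<close> are absorbed
  by \<open>g\<^sup>K\<close> as soon as \<open>K \<ge> \<gamma>(L)\<close>, while the primes of \<open>L\<close> coprime to \<open>g\<close> must divide
  \<open>a\<^sup>K + b\<^sup>K\<close>; that is, \<open>L\<close> divides \<open>g\<^sup>K \<ell>\<close> for \<open>K \<ge> \<gamma>(L)\<close>, and \<open>\<ell>\<close> is the part of \<open>L\<close>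
  coprime to \<open>g\<close>. The condition \<open>K \<ge> \<gamma>(L)\<close> is harmless because \<open>a\<^sup>k + b\<^sup>k\<close> divides
  \<open>a\<^sup>k\<^sup>m + b\<^sup>k\<^sup>m\<close> for every odd \<open>m\<close>, so any exponent \<open>k\<close> can be made arbitrarily large.
\<close>

lemma sum_dvd_odd_power_sum:
  fixes x y :: "'a::comm_ring_1"
  assumes "odd n"
  shows "x + y dvd x ^ n + y ^ n"
proof -
  have "x ^ n + y ^ n = x ^ n - (- y) ^ n"
    using assms by simp
  also have "\<dots> = (x + y) * (\<Sum>i<n. (- y) ^ (n - Suc i) * x ^ i)"
    by (simp add: power_diff_sumr2)
  finally show ?thesis by simp
qed

lemma finite_ell_part_primes:
  fixes L g :: int
  assumes "L \<noteq> 0"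
  shows "finite {p. prime p \<and> p dvd L \<and> \<not> p dvd g}"
  by (rule finite_subset[OF _ finite_prime_divisors[OF assms]]) auto

lemma ell_part_nonzero: "ell_part L g \<noteq> 0"
  unfolding ell_part_def by (cases "finite {p. prime p \<and> p dvd L \<and> \<not> p dvd g}") auto

lemma multiplicity_ell_part:
  fixes L g q :: int
  assumes "L \<noteq> 0" "prime q"
  shows "multiplicity q (ell_part L g) = (if q dvd g then 0 else multiplicity q L)"
  unfolding ell_part_def using assms finite_ell_part_primes[OF assms(1), of g]
  by (subst multiplicity_prod_prime_powers) (auto simp: not_dvd_imp_multiplicity_0)

lemma ell_part_dvd:
  fixes L g :: int
  assumes "L \<noteq> 0"
  shows "ell_part L g dvd L"
  using assms by (intro multiplicity_le_imp_dvd ell_part_nonzero) (simp add: multiplicity_ell_part)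

lemma coprime_ell_part: "coprime (ell_part L g) g"
  unfolding ell_part_def
  by (rule prod_coprime_left) (metis (mono_tags) coprime_commute mem_Collect_eq prime_imp_power_coprime)

lemma multiplicity_le_gamma_bound_mult:
  fixes L g p :: int and K :: nat
  assumes "g \<noteq> 0" "prime p" "p dvd g" "int K \<ge> gamma_bound L g"
  shows "multiplicity p L \<le> K * multiplicity p g"
proof -
  let ?ratio = "\<lambda>p. \<lceil>real (multiplicity p L) / real (multiplicity p g)\<rceil>"
  have "{?ratio p | p. prime p \<and> p dvd g} = ?ratio ` {p. prime p \<and> p dvd g}"
    by auto
  then have "finite {?ratio p | p. prime p \<and> p dvd g}"
    using finite_prime_divisors[OF assms(1)] by simp
  then have "?ratio p \<le> gamma_bound L g"
    unfolding gamma_bound_def using assms(2,3) by (intro Max_ge) auto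
  then have "real (multiplicity p L) / real (multiplicity p g) \<le> real K"
    using assms(4) by (simp add: ceiling_le_iff)
  moreover have "multiplicity p g > 0"
    using prime_multiplicity_gt_zero_iff[OF prime_imp_prime_elem[OF assms(2)] assms(1)] assms(3)
    by simp
  ultimately have "real (multiplicity p L) \<le> real (K * multiplicity p g)"
    by (simp add: divide_le_eq)
  then show ?thesis by linarith
qed

lemma dvd_power_mult_ell_part:
  fixes L g :: int and K :: nat
  assumes "L \<noteq> 0" "g \<noteq> 0" "int K \<ge> gamma_bound L g"
  shows "L dvd g ^ K * ell_part L g"
proof (rule multiplicity_le_imp_dvd[OF assms(1)])
  fix p :: int
  assume p: "prime p"
  have "multiplicity p (g ^ K * ell_part L g) = K * multiplicity p g + multiplicity p (ell_part L g)"
    using prime_elem_multiplicity_mult_distrib[OF prime_imp_prime_elem[OF p] _ ell_part_nonzero]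
      prime_elem_multiplicity_power_distrib[OF prime_imp_prime_elem[OF p] assms(2)] assms(2)
    by simp
  then show "multiplicity p L \<le> multiplicity p (g ^ K * ell_part L g)"
    using multiplicity_le_gamma_bound_mult[OF assms(2) p _ assms(3)] multiplicity_ell_part[OF assms(1) p]
    by (cases "p dvd g") auto
qed

lemma ell_part_dvd_of_dvd_power_mult:
  fixes L g m :: int and K :: nat
  assumes "L \<noteq> 0" "L dvd g ^ K * m"
  shows "ell_part L g dvd m"
proof -
  have "ell_part L g dvd g ^ K * m"
    using ell_part_dvd[OF assms(1)] assms(2) by (rule dvd_trans)
  then show ?thesis
    using coprime_ell_part by (simp add: coprime_dvd_mult_right_iff)
qed

lemma exists_large_exponent_dvd_power_sum:
  fixes d a b :: int and k N :: nat
  assumes "k > 0" "d dvd a ^ k + b ^ k"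
  shows "\<exists>\<kappa>>N. d dvd a ^ \<kappa> + b ^ \<kappa>"
proof (intro exI conjI)
  show "k * (2 * N + 1) > N"
  proof -
    have "N < 1 * (2 * N + 1)"
      by simp
    also have "\<dots> \<le> k * (2 * N + 1)"
      using assms(1) by (intro mult_le_mono1) simp
    finally show ?thesis .
  qed
  have "a ^ k + b ^ k dvd (a ^ k) ^ (2 * N + 1) + (b ^ k) ^ (2 * N + 1)"
    by (rule sum_dvd_odd_power_sum) simp
  then show "d dvd a ^ (k * (2 * N + 1)) + b ^ (k * (2 * N + 1))"
    using assms(2) unfolding power_mult by (rule dvd_trans[rotated])
qed

theorem lemma3p3:
  fixes A B a b g L :: int
  assumes "A \<noteq> 0" and "B \<noteq> 0" and "\<not> coprime A B"
    and "g = gcd A B" and "A = g * a" and "B = g * b"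
    and "L > 0"
  shows "((\<exists>K::nat. K > 0 \<and> L dvd (A ^ K + B ^ K)) \<longleftrightarrow>
           (\<exists>\<kappa>::nat. \<kappa> > 0 \<and> int \<kappa> \<ge> gamma_bound L g \<and> ell_part L g dvd (a ^ \<kappa> + b ^ \<kappa>)))
       \<and> ((\<exists>\<kappa>::nat. \<kappa> > 0 \<and> int \<kappa> \<ge> gamma_bound L g \<and> ell_part L g dvd (a ^ \<kappa> + b ^ \<kappa>)) \<longleftrightarrow>
           (\<exists>k::nat. k > 0 \<and> ell_part L g dvd (a ^ k + b ^ k)))"
proof -
  have "g \<noteq> 0" "L \<noteq> 0"
    using assms(1,4,7) by auto
  have power_sum: "A ^ K + B ^ K = g ^ K * (a ^ K + b ^ K)" for K
    using assms(5,6) by (simp add: power_mult_distrib distrib_left)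
  have i_iii: "ell_part L g dvd a ^ K + b ^ K" if "L dvd A ^ K + B ^ K" for K
    using ell_part_dvd_of_dvd_power_mult[OF \<open>L \<noteq> 0\<close>] that by (simp add: power_sum)
  have ii_i: "L dvd A ^ K + B ^ K"
    if "int K \<ge> gamma_bound L g" "ell_part L g dvd a ^ K + b ^ K" for K
    using dvd_power_mult_ell_part[OF \<open>L \<noteq> 0\<close> \<open>g \<noteq> 0\<close> that(1)] that(2)
    by (simp add: power_sum dvd_trans mult_dvd_mono)
  have iii_ii: "\<exists>\<kappa>. \<kappa> > 0 \<and> int \<kappa> \<ge> gamma_bound L g \<and> ell_part L g dvd a ^ \<kappa> + b ^ \<kappa>"
    if k: "k > 0" "ell_part L g dvd a ^ k + b ^ k" for k
  proof -
    obtain \<kappa> where "\<kappa> > nat (gamma_bound L g)" "ell_part L g dvd a ^ \<kappa> + b ^ \<kappa>"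
      using exists_large_exponent_dvd_power_sum[OF k] by blast
    then show ?thesis
      by (intro exI[of _ \<kappa>] conjI) auto
  qed
  show ?thesis
    using i_iii ii_i iii_ii by blast
qed

end
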